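(* Any two welded knot diagrams $K$ and $K'$ are diagonal-equivalent, i.e. one can be obtained from the other by a finite sequence of diagonal moves and classical and welded Reidemeister moves.
   Context: A welded knot diagram is a knot diagram that may have welded (virtual) crossings as well as classical crossings; welded knots are equivalence classes of welded knot diagrams under the three classical Reidemeister moves and the welded Reidemeister moves (the virtual Reidemeister moves together with the move allowing a strand passing over to slide past a welded crossing). A diagonal move (D-move) is a local move on a diagram defined as follows. Consider a disk in which the diagram consists of four arcs $a,b,c,d$ arranged in a "$\#$" pattern: $a$ and $c$ do not meet each other, $b$ and $d$ do not meet each other, and each of $a,c$ crosses each of $b,d$ exactly once in a classical crossing, giving four crossings labelled $1,2,3,4$ in cyclic order around the central square. The pairs $\{1,3\}$ and $\{2,4\}$ are the diagonal crossing pairs. A diagonal move changes the over/under information at both crossings of one diagonal pair and leaves the rest of the diagram unchanged; it is allowed for every choice of orientations of the arcs. *)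

theory Defs
  imports Main
begin

text \<open>
  Combinatorial model: a welded knot diagram, up to the virtual (detour) moves,
  is the same thing as a signed Gauss diagram on one circle; we encode it as a
  linear Gauss word read along the (oriented) knot starting at some point.
  A letter (x, ov, s) records that the knot passes through classical crossing
  labelled x, as the over-strand iff ov, and s is the sign (+1/-1) of x.
  Welded crossings are invisible in the Gauss word.
\<close>

type_synonym letter = "nat \<times> bool \<times> int"

definition unit_sgn :: "int \<Rightarrow> bool" where
  "unit_sgn e \<longleftrightarrow> e = 1 \<or> e = -1"

definition gauss_wf :: "letter list \<Rightarrow> bool" where
  "gauss_wf w \<longleftrightarrow>
     (\<forall>x ov s. (x, ov, s) \<in> set w \<longrightarrow>
        unit_sgn s \<and>
        length (filter (\<lambda>(y, p, r). y = x \<and> p = ov) w) = 1 \<and>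
        (x, \<not> ov, s) \<in> set w)"

fun interleave :: "'a list list \<Rightarrow> 'a list list \<Rightarrow> 'a list" where
  "interleave (b # bs) (r # rs) = b @ r @ interleave bs rs"
| "interleave _ _ = []"

text \<open>Local replacement: the blocks bs occur as pairwise disjoint consecutive
  segments of w (in some order pi along the word); w' is obtained by replacing
  each block bs!i by bs'!i, all other letters unchanged.  (Cyclicity of the
  word is handled by the separate rotation move.)\<close>
definition local_replace ::
  "letter list list \<Rightarrow> letter list list \<Rightarrow> letter list \<Rightarrow> letter list \<Rightarrow> bool" where
  "local_replace bs bs' w w' \<longleftrightarrow> length bs' = length bs \<and>
     (\<exists>\<pi> rs. distinct \<pi> \<and> set \<pi> = {..<length bs} \<and> length rs = length bs \<and>
        w = interleave (map (\<lambda>i. bs ! i) \<pi>) rs \<and>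
        w' = interleave (map (\<lambda>i. bs' ! i) \<pi>) rs)"

text \<open>Sign convention: the sign of a crossing is the sign of det(d_over, d_under),
  where d_over, d_under are the direction vectors of the over/under strand.\<close>

text \<open>Three straight strands L1 (horizontal,
  y = t, direction (h,0)), L2 (line y = x, direction e2(1,1)),
  L3 (line y = -x, direction e3(1,-1)); heights ht1, ht2, ht3 (larger = higher).
  Crossings: cy = L1 \<inter> L2, cz = L1 \<inter> L3, co = L2 \<inter> L3 (at origin).
  The parameter t = \<plusminus>1 says on which side of co the strand L1 lies;
  the R3 move changes t to -t.  Returned: the three two-letter blocks
  (the passages of L1, L2, L3 through the triangle).\<close>
definition r3_blocks ::
  "nat \<Rightarrow> nat \<Rightarrow> nat \<Rightarrow> nat \<Rightarrow> nat \<Rightarrow> nat \<Rightarrow> int \<Rightarrow> int \<Rightarrow> int \<Rightarrow> int \<Rightarrow> letter list list" where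
  "r3_blocks cy cz co ht1 ht2 ht3 h e2 e3 t =
    (let o12 = (ht1 > ht2); o13 = (ht1 > ht3); o23 = (ht2 > ht3);
         sY = (if o12 then h * e2 else - (h * e2));
         sZ = (if o13 then - (h * e3) else h * e3);
         sO = (if o23 then - (e2 * e3) else e2 * e3);
         Y1 = (cy, o12, sY); Z1 = (cz, o13, sZ);
         O2 = (co, o23, sO); Y2 = (cy, \<not> o12, sY);
         O3 = (co, \<not> o23, sO); Z3 = (cz, \<not> o13, sZ)
     in [if h * t = 1 then [Z1, Y1] else [Y1, Z1],
         if e2 * t = 1 then [O2, Y2] else [Y2, O2],
         if e3 * t = -1 then [O3, Z3] else [Z3, O3]])"

text \<open>Arcs a (y = 1, direction (ha,0)),
  c (y = -1, direction (hc,0)), b (x = -1, direction (0,vb)),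
  d (x = 1, direction (0,vd)).  Crossings in cyclic order around the central
  square: P1 = a\<inter>b, P2 = a\<inter>d, P3 = c\<inter>d, P4 = c\<inter>b with labels x1..x4;
  oi says that the horizontal arc is over at Pi.  Returned: the four two-letter
  blocks (the passages of a, b, c, d through the disk).\<close>
definition d_blocks ::
  "nat \<Rightarrow> nat \<Rightarrow> nat \<Rightarrow> nat \<Rightarrow> int \<Rightarrow> int \<Rightarrow> int \<Rightarrow> int \<Rightarrow>
   bool \<Rightarrow> bool \<Rightarrow> bool \<Rightarrow> bool \<Rightarrow> letter list list" where
  "d_blocks x1 x2 x3 x4 ha hc vb vd o1 o2 o3 o4 =
    (let s1 = (if o1 then ha * vb else - (ha * vb));
         s2 = (if o2 then ha * vd else - (ha * vd));
         s3 = (if o3 then hc * vd else - (hc * vd));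
         s4 = (if o4 then hc * vb else - (hc * vb));
         H1 = (x1, o1, s1); H2 = (x2, o2, s2); H3 = (x3, o3, s3); H4 = (x4, o4, s4);
         V1 = (x1, \<not> o1, s1); V2 = (x2, \<not> o2, s2); V3 = (x3, \<not> o3, s3); V4 = (x4, \<not> o4, s4)
     in [if ha = 1 then [H1, H2] else [H2, H1],
         if vb = 1 then [V4, V1] else [V1, V4],
         if hc = 1 then [H4, H3] else [H3, H4],
         if vd = 1 then [V3, V2] else [V2, V3]])"

definition rotate_move :: "letter list \<Rightarrow> letter list \<Rightarrow> bool" where
  "rotate_move w w' \<longleftrightarrow> w' = rotate1 w"

definition relabel_move :: "letter list \<Rightarrow> letter list \<Rightarrow> bool" where
  "relabel_move w w' \<longleftrightarrow> (\<exists>f. inj f \<and> w' = map (\<lambda>(x, ov, s). (f x, ov, s)) w)"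

definition R1_move :: "letter list \<Rightarrow> letter list \<Rightarrow> bool" where
  "R1_move w w' \<longleftrightarrow> (\<exists>x ov s. unit_sgn s \<and>
     local_replace [[(x, ov, s), (x, \<not> ov, s)]] [[]] w w')"

definition R2_move :: "letter list \<Rightarrow> letter list \<Rightarrow> bool" where
  "R2_move w w' \<longleftrightarrow> (\<exists>x y s B. x \<noteq> y \<and> unit_sgn s \<and>
     (B = [(x, False, s), (y, False, - s)] \<or> B = [(y, False, - s), (x, False, s)]) \<and>
     local_replace [[(x, True, s), (y, True, - s)], B] [[], []] w w')"

definition R3_move :: "letter list \<Rightarrow> letter list \<Rightarrow> bool" where
  "R3_move w w' \<longleftrightarrow> (\<exists>cy cz co ht1 ht2 ht3 h e2 e3 t.
     distinct [cy, cz, co] \<and> distinct [ht1, ht2, ht3] \<and>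
     unit_sgn h \<and> unit_sgn e2 \<and> unit_sgn e3 \<and> unit_sgn t \<and>
     local_replace (r3_blocks cy cz co ht1 ht2 ht3 h e2 e3 t)
                   (r3_blocks cy cz co ht1 ht2 ht3 h e2 e3 (- t)) w w')"

text \<open>Welded move (an over-passing strand slides past a welded crossing):
  in the Gauss word, two adjacent over-passages commute.\<close>
definition OC_move :: "letter list \<Rightarrow> letter list \<Rightarrow> bool" where
  "OC_move w w' \<longleftrightarrow> (\<exists>x y s r.
     local_replace [[(x, True, s), (y, True, r)]] [[(y, True, r), (x, True, s)]] w w')"

text \<open>Diagonal move: crossing changes at both crossings of a diagonal pair.\<close>
definition D_move :: "letter list \<Rightarrow> letter list \<Rightarrow> bool" where
  "D_move w w' \<longleftrightarrow> (\<exists>x1 x2 x3 x4 ha hc vb vd o1 o2 o3 o4 p1 p2 p3 p4.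
     distinct [x1, x2, x3, x4] \<and>
     unit_sgn ha \<and> unit_sgn hc \<and> unit_sgn vb \<and> unit_sgn vd \<and>
     ((p1, p2, p3, p4) = (\<not> o1, o2, \<not> o3, o4) \<or> (p1, p2, p3, p4) = (o1, \<not> o2, o3, \<not> o4)) \<and>
     local_replace (d_blocks x1 x2 x3 x4 ha hc vb vd o1 o2 o3 o4)
                   (d_blocks x1 x2 x3 x4 ha hc vb vd p1 p2 p3 p4) w w')"

definition diag_step :: "letter list \<Rightarrow> letter list \<Rightarrow> bool" where
  "diag_step w w' \<longleftrightarrow> gauss_wf w \<and> gauss_wf w' \<and>
     (rotate_move w w' \<or> relabel_move w w' \<or> R1_move w w' \<or> R2_move w w' \<or>
      R3_move w w' \<or> OC_move w w' \<or> D_move w w')"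

definition diag_equiv :: "letter list \<Rightarrow> letter list \<Rightarrow> bool" where
  "diag_equiv = (\<lambda>w w'. diag_step w w' \<or> diag_step w' w)\<^sup>*\<^sup>*"

end

theory Submission
  imports Defs "HOL-Library.Multiset"
begin

text \<open>Every well-formed Gauss word is D-equivalent to the empty word, by induction on its
  length. Any two crossings x and y can be changed together: two Reidemeister II moves create
  a "#" in which x and y form a diagonal pair, a D-move changes both, and two Reidemeister II
  moves remove the "#" again. Hence any even set of crossings can be changed. Now take two
  occurrences of a label with no label repeated strictly between them, and change the crossings
  passed under in between (and the outer label too, if needed for parity). The segment between
  the two occurrences then consists of over-passages only, so the over-passage of the outer
  label slides across it by welded moves, and the two occurrences cancel by a Reidemeister I
  move.\<close>

section \<open>Well-formed Gauss words\<close>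

definition crossings :: "letter list \<Rightarrow> nat set" where
  "crossings w = fst ` set w"

definition wf_letter_set :: "letter set \<Rightarrow> bool" where
  "wf_letter_set S \<longleftrightarrow> (\<forall>x ov s. (x, ov, s) \<in> S \<longrightarrow>
     unit_sgn s \<and> (x, \<not> ov, s) \<in> S \<and> (\<forall>s'. (x, ov, s') \<in> S \<longrightarrow> s' = s))"

lemma gauss_wf_distinct:
  assumes "gauss_wf w"
  shows "distinct w"
proof (rule ccontr)
  assume "\<not> distinct w"
  then obtain xs ys zs x ov s where w: "w = xs @ [(x, ov, s)] @ ys @ [(x, ov, s)] @ zs"
    using not_distinct_decomp by (metis prod_cases3)
  then have "length (filter (\<lambda>(y, p, r). y = x \<and> p = ov) w) = 1"
    using assms unfolding gauss_wf_def by auto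
  then show False using w by simp
qed

lemma gauss_wf_letterD:
  assumes "gauss_wf w" "(x, ov, s) \<in> set w"
  shows "unit_sgn s" "(x, \<not> ov, s) \<in> set w"
  using assms unfolding gauss_wf_def by blast+

lemma gauss_wf_sign_unique:
  assumes wf: "gauss_wf w" and "(x, ov, s) \<in> set w" "(x, ov', s') \<in> set w"
  shows "s' = s"
proof -
  have same_passage: "r' = r" if "(x, p, r) \<in> set w" "(x, p, r') \<in> set w" for p r r'
  proof (rule ccontr)
    assume "r' \<noteq> r"
    let ?P = "\<lambda>(y, q, _). y = x \<and> q = p"
    have "{(x, p, r), (x, p, r')} \<subseteq> {l. ?P l} \<inter> set w" using that by auto
    then have "card {(x, p, r), (x, p, r')} \<le> card ({l. ?P l} \<inter> set w)"
      by (intro card_mono) auto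
    moreover have "length (filter ?P w) = 1" using wf that(1) unfolding gauss_wf_def by auto
    ultimately show False
      using \<open>r' \<noteq> r\<close> distinct_length_filter[OF gauss_wf_distinct[OF wf]] by simp
  qed
  show ?thesis
    using assms same_passage gauss_wf_letterD(2)[OF wf assms(2)] by (cases "ov' = ov") auto
qed

lemma gauss_wf_iff: "gauss_wf w \<longleftrightarrow> distinct w \<and> wf_letter_set (set w)"
proof
  assume wf: "gauss_wf w"
  then show "distinct w \<and> wf_letter_set (set w)"
    using gauss_wf_distinct gauss_wf_sign_unique unfolding wf_letter_set_def gauss_wf_def
    by blast
next
  assume "distinct w \<and> wf_letter_set (set w)"
  then have dist: "distinct w" and S: "wf_letter_set (set w)" by auto
  show "gauss_wf w"
    unfolding gauss_wf_def
  proof (intro allI impI conjI)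
    fix x ov s assume l: "(x, ov, s) \<in> set w"
    then show "unit_sgn s" "(x, \<not> ov, s) \<in> set w" using S unfolding wf_letter_set_def by auto
    have "{l. (\<lambda>(y, p, r). y = x \<and> p = ov) l} \<inter> set w = {(x, ov, s)}"
      using S l unfolding wf_letter_set_def by auto
    then show "length (filter (\<lambda>(y, p, r). y = x \<and> p = ov) w) = 1"
      using dist by (simp add: distinct_length_filter)
  qed
qed

lemma gauss_wf_mset_cong: "mset u = mset v \<Longrightarrow> gauss_wf u \<longleftrightarrow> gauss_wf v"
  by (metis gauss_wf_iff mset_eq_imp_distinct_iff mset_eq_setD)

lemma wf_letter_set_Un:
  assumes "fst ` S \<inter> fst ` T = {}"
  shows "wf_letter_set (S \<union> T) \<longleftrightarrow> wf_letter_set S \<and> wf_letter_set T"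
proof -
  have "(x, ov', s') \<notin> T" if "(x, ov, s) \<in> S" for x ov ov' s s'
    using assms that by force
  moreover have "(x, ov', s') \<notin> S" if "(x, ov, s) \<in> T" for x ov ov' s s'
    using assms that by force
  ultimately show ?thesis unfolding wf_letter_set_def by blast
qed

lemma gauss_wf_append:
  assumes "crossings u \<inter> crossings v = {}"
  shows "gauss_wf (u @ v) \<longleftrightarrow> gauss_wf u \<and> gauss_wf v"
proof -
  have "set u \<inter> set v = {}" using assms unfolding crossings_def by auto
  then show ?thesis
    using wf_letter_set_Un[of "set u" "set v"] assms unfolding gauss_wf_iff crossings_def by auto
qed

lemma gauss_wf_crossing_letters:
  assumes "gauss_wf w" "x \<in> crossings w"
  obtains ox where "{l \<in> set w. fst l = x} =
    {(x, ox, if ox then -1 else 1), (x, \<not> ox, if ox then -1 else 1)}"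
proof -
  obtain ov s where x_letter: "(x, ov, s) \<in> set w"
    using assms(2) unfolding crossings_def by force
  then have "unit_sgn s" "(x, \<not> ov, s) \<in> set w" using gauss_wf_letterD[OF assms(1)] by auto
  moreover have "l = (x, True, s) \<or> l = (x, False, s)" if "l \<in> set w" "fst l = x" for l
  proof -
    obtain ov' s' where l: "l = (x, ov', s')" using \<open>fst l = x\<close> by (cases l) auto
    then have "s' = s" using gauss_wf_sign_unique[OF assms(1) x_letter] that(1) by simp
    then show ?thesis using l by (cases ov') auto
  qed
  ultimately have "{l \<in> set w. fst l = x} = {(x, s = -1, s), (x, s \<noteq> -1, s)}"
    using x_letter by (cases ov) (auto simp: unit_sgn_def)
  then show thesis using \<open>unit_sgn s\<close> that[of "s = -1"] by (auto simp: unit_sgn_def)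
qed

lemma gauss_wf_same_label:
  assumes wf: "gauss_wf w" and "(x, ov, s) \<in> set w" "B \<in> set w" "fst B = x" "B \<noteq> (x, ov, s)"
  shows "B = (x, \<not> ov, s)"
  using assms gauss_wf_sign_unique[OF wf assms(2), of "fst (snd B)" "snd (snd B)"]
  by (cases B) auto

lemma gauss_wf_delete_pair:
  assumes wf: "gauss_wf (u @ [A] @ v @ [B] @ t)" and "fst A = fst B"
  shows "gauss_wf (u @ v @ t)"
proof -
  obtain x ov s where A: "A = (x, ov, s)" by (cases A)
  have dist: "distinct (u @ [A] @ v @ [B] @ t)" using wf gauss_wf_distinct by blast
  have B: "B = (x, \<not> ov, s)"
    using gauss_wf_same_label[OF wf, of x ov s B] A assms(2) dist by auto
  have "l = A \<or> l = B" if "l \<in> set (u @ [A] @ v @ [B] @ t)" "fst l = x" for l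
    using gauss_wf_same_label[OF wf, of x ov s l] that A B by auto
  then have "x \<notin> crossings (u @ v @ t)"
    using dist unfolding crossings_def by auto
  then have "crossings (u @ v @ t) \<inter> crossings [A, B] = {}"
    using A assms(2) unfolding crossings_def by auto
  moreover have "gauss_wf ((u @ v @ t) @ [A, B])"
    using wf gauss_wf_mset_cong[of "(u @ v @ t) @ [A, B]" "u @ [A] @ v @ [B] @ t"] by simp
  ultimately show ?thesis using gauss_wf_append by blast
qed

section \<open>Moves anywhere in the word\<close>

lemma diag_equiv_refl [simp]: "diag_equiv w w"
  by (simp add: diag_equiv_def)

lemma diag_equiv_sym: "diag_equiv u v \<Longrightarrow> diag_equiv v u"
  unfolding diag_equiv_def by (rule sympD[OF symp_rtranclp]) (auto intro: sympI)

lemma diag_equiv_trans [trans]: "diag_equiv u v \<Longrightarrow> diag_equiv v w \<Longrightarrow> diag_equiv u w"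
  unfolding diag_equiv_def by (rule rtranclp_trans)

lemma diag_step_imp_diag_equiv: "diag_step u v \<Longrightarrow> diag_equiv u v"
  unfolding diag_equiv_def by (simp add: r_into_rtranclp)

lemma diag_equiv_rotate: "gauss_wf (p @ X) \<Longrightarrow> diag_equiv (p @ X) (X @ p)"
proof (induction p arbitrary: X)
  case Nil
  then show ?case by simp
next
  case (Cons a p)
  have wf': "gauss_wf (p @ X @ [a])"
    using Cons.prems gauss_wf_mset_cong[of "p @ X @ [a]" "a # p @ X"] by simp
  have "diag_step (a # p @ X) (p @ X @ [a])"
    using Cons.prems wf' by (simp add: diag_step_def rotate_move_def)
  then have "diag_equiv (a # p @ X) (p @ (X @ [a]))" by (simp add: diag_step_imp_diag_equiv)
  also have "diag_equiv \<dots> ((X @ [a]) @ p)" using Cons.IH[of "X @ [a]"] wf' by simp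
  finally show ?case by simp
qed

definition local_replace_shifted ::
  "letter list list \<Rightarrow> letter list list \<Rightarrow> letter list \<Rightarrow> letter list \<Rightarrow> bool" where
  "local_replace_shifted bs bs' w w' \<longleftrightarrow> length bs' = length bs \<and>
     (\<exists>p \<pi> rs. distinct \<pi> \<and> set \<pi> = {..<length bs} \<and> length rs = length bs \<and>
        w = p @ interleave (map (\<lambda>i. bs ! i) \<pi>) rs \<and>
        w' = p @ interleave (map (\<lambda>i. bs' ! i) \<pi>) rs)"

lemma local_replace_shifted_single: "local_replace_shifted [b] [b'] (u @ b @ v) (u @ b' @ v)"
  unfolding local_replace_shifted_def
  by (auto intro!: exI[of _ u] exI[of _ "[0::nat]"] exI[of _ "[v]"])

lemma interleave_append:
  "length bs = length rs \<Longrightarrow> rs \<noteq> [] \<Longrightarrow>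
   interleave bs rs @ t = interleave bs (butlast rs @ [last rs @ t])"
proof (induction rs arbitrary: bs)
  case Nil
  then show ?case by simp
next
  case (Cons r rs)
  then obtain b bs' where "bs = b # bs'" by (cases bs) auto
  with Cons show ?case by (cases rs) auto
qed

lemma local_replace_shifted_rotate:
  assumes "local_replace_shifted bs bs' w w'" "bs \<noteq> []"
  obtains p X X' where "w = p @ X" "w' = p @ X'" "local_replace bs bs' (X @ p) (X' @ p)"
proof -
  obtain p \<pi> rs where len: "length bs' = length bs" "length rs = length bs"
    and \<pi>: "distinct \<pi>" "set \<pi> = {..<length bs}"
    and w: "w = p @ interleave (map (\<lambda>i. bs ! i) \<pi>) rs"
    and w': "w' = p @ interleave (map (\<lambda>i. bs' ! i) \<pi>) rs"
    using assms(1) unfolding local_replace_shifted_def by blast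
  have "length \<pi> = length bs" using \<pi> by (metis distinct_card card_lessThan)
  moreover have "rs \<noteq> []" using len assms(2) by auto
  ultimately have "interleave (map (\<lambda>i. B ! i) \<pi>) rs @ p =
      interleave (map (\<lambda>i. B ! i) \<pi>) (butlast rs @ [last rs @ p])" for B
    using len by (intro interleave_append) auto
  moreover have "length (butlast rs @ [last rs @ p]) = length bs"
    using len \<open>rs \<noteq> []\<close> assms(2) by simp
  ultimately have "local_replace bs bs' (interleave (map (\<lambda>i. bs ! i) \<pi>) rs @ p)
      (interleave (map (\<lambda>i. bs' ! i) \<pi>) rs @ p)"
    unfolding local_replace_def using len \<pi> by metis
  then show thesis using that w w' by blast
qed

lemma diag_equiv_local_move:
  assumes "local_replace_shifted bs bs' w w'" "bs \<noteq> []" "gauss_wf w" "gauss_wf w'"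
    and move: "\<And>u u'. local_replace bs bs' u u' \<Longrightarrow> gauss_wf u \<Longrightarrow> gauss_wf u' \<Longrightarrow> diag_step u u'"
  shows "diag_equiv w w'"
proof -
  obtain p X X' where w: "w = p @ X" and w': "w' = p @ X'"
    and replace: "local_replace bs bs' (X @ p) (X' @ p)"
    using local_replace_shifted_rotate[OF assms(1,2)] .
  have wf: "gauss_wf (X @ p)" "gauss_wf (X' @ p)"
    using assms(3,4) w w' gauss_wf_mset_cong[of "X @ p" "p @ X"]
      gauss_wf_mset_cong[of "X' @ p" "p @ X'"] by (simp_all add: union_commute)
  have "diag_equiv w (X @ p)" using diag_equiv_rotate assms(3) w by simp
  also have "diag_equiv \<dots> (X' @ p)" using move[OF replace wf] by (rule diag_step_imp_diag_equiv)
  also have "diag_equiv \<dots> w'" using diag_equiv_rotate assms(4) w' diag_equiv_sym by simp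
  finally show ?thesis .
qed

lemma diag_equiv_R1:
  assumes wf: "gauss_wf (u @ [(x, ov, s), (x, \<not> ov, s)] @ v)"
  shows "diag_equiv (u @ [(x, ov, s), (x, \<not> ov, s)] @ v) (u @ v)"
proof (rule diag_equiv_local_move)
  show "local_replace_shifted [[(x, ov, s), (x, \<not> ov, s)]] [[]]
      (u @ [(x, ov, s), (x, \<not> ov, s)] @ v) (u @ v)"
    using local_replace_shifted_single[of "[(x, ov, s), (x, \<not> ov, s)]" "[]" u v] by simp
  show "gauss_wf (u @ v)" using gauss_wf_delete_pair[of u _ "[]" _ v] wf by simp
  have "unit_sgn s" using gauss_wf_letterD(1)[OF wf, of x ov s] by simp
  then show "diag_step w w'" if "local_replace [[(x, ov, s), (x, \<not> ov, s)]] [[]] w w'"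
    "gauss_wf w" "gauss_wf w'" for w w'
  proof -
    have "R1_move w w'" unfolding R1_move_def using that(1) \<open>unit_sgn s\<close> by blast
    then show ?thesis using that(2,3) unfolding diag_step_def by blast
  qed
qed (use wf in auto)

lemma diag_equiv_R2_shifted:
  assumes "local_replace_shifted [[(x, True, s), (y, True, - s)], [(x, False, s), (y, False, - s)]]
      [[], []] w w'"
    and "x \<noteq> y" "unit_sgn s" "gauss_wf w" "gauss_wf w'"
  shows "diag_equiv w w'"
  using assms(1)
proof (rule diag_equiv_local_move)
  show "diag_step u u'"
    if "local_replace [[(x, True, s), (y, True, - s)], [(x, False, s), (y, False, - s)]] [[], []] u u'"
      "gauss_wf u" "gauss_wf u'" for u u'
  proof -
    have "R2_move u u'" unfolding R2_move_def using that(1) assms(2,3) by blast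
    then show ?thesis using that(2,3) unfolding diag_step_def by blast
  qed
qed (use assms in auto)

lemma diag_equiv_swap_over:
  assumes wf: "gauss_wf (u @ (x, True, s) # (y, True, r) # v)"
  shows "diag_equiv (u @ (x, True, s) # (y, True, r) # v) (u @ (y, True, r) # (x, True, s) # v)"
proof (rule diag_equiv_local_move)
  show "local_replace_shifted [[(x, True, s), (y, True, r)]] [[(y, True, r), (x, True, s)]]
      (u @ (x, True, s) # (y, True, r) # v) (u @ (y, True, r) # (x, True, s) # v)"
    using local_replace_shifted_single[of "[(x, True, s), (y, True, r)]"
      "[(y, True, r), (x, True, s)]" u v] by simp
  show "gauss_wf (u @ (y, True, r) # (x, True, s) # v)"
    using wf gauss_wf_mset_cong[of "u @ (y, True, r) # (x, True, s) # v"
      "u @ (x, True, s) # (y, True, r) # v"] by simp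
  show "diag_step u u'"
    if "local_replace [[(x, True, s), (y, True, r)]] [[(y, True, r), (x, True, s)]] u u'"
      "gauss_wf u" "gauss_wf u'" for u u'
  proof -
    have "OC_move u u'" unfolding OC_move_def using that(1) by blast
    then show ?thesis using that(2,3) unfolding diag_step_def by blast
  qed
qed (use wf in auto)

lemma diag_equiv_D_shifted:
  assumes "local_replace_shifted (d_blocks x1 x2 x3 x4 ha hc vb vd o1 o2 o3 o4)
      (d_blocks x1 x2 x3 x4 ha hc vb vd (\<not> o1) o2 (\<not> o3) o4) w w'"
    and "distinct [x1, x2, x3, x4]" "unit_sgn ha" "unit_sgn hc" "unit_sgn vb" "unit_sgn vd"
    and "gauss_wf w" "gauss_wf w'"
  shows "diag_equiv w w'"
  using assms(1)
proof (rule diag_equiv_local_move)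
  show "d_blocks x1 x2 x3 x4 ha hc vb vd o1 o2 o3 o4 \<noteq> []" by (simp add: d_blocks_def Let_def)
  show "diag_step u u'"
    if "local_replace (d_blocks x1 x2 x3 x4 ha hc vb vd o1 o2 o3 o4)
      (d_blocks x1 x2 x3 x4 ha hc vb vd (\<not> o1) o2 (\<not> o3) o4) u u'" "gauss_wf u" "gauss_wf u'"
    for u u'
  proof -
    have "D_move u u'"
      unfolding D_move_def using that(1) assms(2-6) by (intro exI conjI; assumption?; simp)
    then show ?thesis using that(2,3) unfolding diag_step_def by blast
  qed
qed (use assms in auto)

lemma diag_equiv_slide_over:
  assumes "gauss_wf (u @ (x, True, s) # m @ v)" "\<forall>l\<in>set m. fst (snd l)"
  shows "diag_equiv (u @ (x, True, s) # m @ v) (u @ m @ (x, True, s) # v)"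
  using assms
proof (induction m arbitrary: u)
  case Nil
  then show ?case by simp
next
  case (Cons c m)
  obtain y r where c: "c = (y, True, r)" using Cons.prems(2) by (cases c) auto
  have "diag_equiv (u @ (x, True, s) # c # m @ v) ((u @ [c]) @ (x, True, s) # m @ v)"
    using diag_equiv_swap_over[of u x s y r "m @ v"] Cons.prems(1) c by simp
  also have "diag_equiv \<dots> ((u @ [c]) @ m @ (x, True, s) # v)"
  proof (rule Cons.IH)
    show "gauss_wf ((u @ [c]) @ (x, True, s) # m @ v)"
      using Cons.prems(1) c
        gauss_wf_mset_cong[of "(u @ [c]) @ (x, True, s) # m @ v" "u @ (x, True, s) # c # m @ v"]
      by simp
  qed (use Cons.prems in simp)
  finally show ?case by simp
qed

lemma diag_equiv_cancel_across_over:
  assumes wf: "gauss_wf (p @ [A] @ m @ [B] @ q)" and "fst A = fst B"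
    and over: "\<forall>l\<in>set m. fst (snd l)"
  shows "diag_equiv (p @ [A] @ m @ [B] @ q) (p @ m @ q)"
proof -
  obtain x ov s where A: "A = (x, ov, s)" by (cases A)
  have "distinct (p @ [A] @ m @ [B] @ q)" using wf gauss_wf_distinct by blast
  then have B: "B = (x, \<not> ov, s)"
    using gauss_wf_same_label[OF wf, of x ov s B] A assms(2) by auto
  show ?thesis
  proof (cases ov)
    case True
    have "diag_equiv (p @ [A] @ m @ [B] @ q) (p @ m @ [A] @ [B] @ q)"
      using diag_equiv_slide_over[of p x s m "B # q"] wf over A True by simp
    also have "diag_equiv \<dots> ((p @ m) @ [A, B] @ q)" by simp
    also have "diag_equiv \<dots> ((p @ m) @ q)"
      using diag_equiv_R1[of "p @ m" x ov s q] A B wf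
        gauss_wf_mset_cong[of "(p @ m) @ [A, B] @ q" "p @ [A] @ m @ [B] @ q"] by simp
    finally show ?thesis by simp
  next
    case False
    have wf': "gauss_wf ((p @ [A]) @ B # m @ q)"
      using wf gauss_wf_mset_cong[of "(p @ [A]) @ B # m @ q" "p @ [A] @ m @ [B] @ q"] by simp
    have "diag_equiv (p @ [A] @ m @ [B] @ q) ((p @ [A]) @ B # m @ q)"
      using diag_equiv_slide_over[of "p @ [A]" x s m q] wf' over B False
      by (simp add: diag_equiv_sym)
    also have "diag_equiv \<dots> (p @ [A, B] @ m @ q)" by simp
    also have "diag_equiv \<dots> (p @ m @ q)"
      using diag_equiv_R1[of p x False s "m @ q"] wf' A B False by simp
    finally show ?thesis .
  qed
qed

section \<open>Inserting Reidemeister II bigons\<close>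

definition map_insert ::
  "(letter \<Rightarrow> letter) \<Rightarrow> (letter \<Rightarrow> letter list) \<Rightarrow> letter list \<Rightarrow> letter list" where
  "map_insert g K w = concat (map (\<lambda>l. g l # K l) w)"

lemma map_insert_no_insertions [simp]: "map_insert g (\<lambda>_. []) w = map g w"
  by (induction w) (simp_all add: map_insert_def)

lemma mset_concat_map_supported:
  assumes "distinct w" "distinct ls" "set ls \<subseteq> set w" "\<And>l. l \<notin> set ls \<Longrightarrow> K l = []"
  shows "mset (concat (map K w)) = mset (concat (map K ls))"
proof -
  have "mset (concat (map K w)) = (\<Sum>l\<in>set w. mset (K l))"
    using assms(1) by (simp add: mset_concat sum_list_distinct_conv_sum_set)
  also have "\<dots> = (\<Sum>l\<in>set ls. mset (K l))"
    using assms(3,4) by (intro sum.mono_neutral_right) auto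
  also have "\<dots> = mset (concat (map K ls))"
    using assms(2) by (simp add: mset_concat sum_list_distinct_conv_sum_set)
  finally show ?thesis .
qed

lemma concat_map_eq_interleave:
  assumes "distinct w" "distinct ls"
    and "\<forall>l\<in>set ls. F l = C l @ B l @ D l \<and> F' l = C l @ B' l @ D l"
    and "\<forall>l\<in>set w. l \<notin> set ls \<longrightarrow> F l = F' l"
  shows "\<exists>p \<pi> rs. distinct \<pi> \<and> set \<pi> = {i. i < length ls \<and> ls ! i \<in> set w} \<and>
     length rs = length \<pi> \<and>
     concat (map F w) = p @ interleave (map (\<lambda>i. B (ls ! i)) \<pi>) rs \<and>
     concat (map F' w) = p @ interleave (map (\<lambda>i. B' (ls ! i)) \<pi>) rs"
  using assms
proof (induction w)
  case Nil
  show ?case by (intro exI[of _ "[]"]) simp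
next
  case (Cons a w)
  have "distinct w" and unchanged: "\<forall>l\<in>set w. l \<notin> set ls \<longrightarrow> F l = F' l"
    using Cons.prems(1,4) by auto
  obtain p \<pi> rs where \<pi>: "distinct \<pi>" "set \<pi> = {i. i < length ls \<and> ls ! i \<in> set w}"
    and rs: "length rs = length \<pi>"
    and F: "concat (map F w) = p @ interleave (map (\<lambda>i. B (ls ! i)) \<pi>) rs"
    and F': "concat (map F' w) = p @ interleave (map (\<lambda>i. B' (ls ! i)) \<pi>) rs"
    using Cons.IH[OF \<open>distinct w\<close> Cons.prems(2,3) unchanged] by (elim exE conjE)
  show ?case
  proof (cases "a \<in> set ls")
    case False
    then have "{i. i < length ls \<and> ls ! i \<in> set (a # w)} = set \<pi>"
      using \<pi>(2) by (auto dest: nth_mem)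
    moreover have "F a = F' a" using Cons.prems(4) False by simp
    ultimately show ?thesis
      using \<pi>(1) rs F F' by (intro exI[of _ "F a @ p"] exI[of _ \<pi>] exI[of _ rs]) simp
  next
    case True
    then obtain i where i: "i < length ls" "ls ! i = a" by (auto simp: in_set_conv_nth)
    have "ls ! j = a \<longleftrightarrow> j = i" if "j < length ls" for j
      using nth_eq_iff_index_eq[OF Cons.prems(2) that i(1)] i(2) by simp
    then have "{j. j < length ls \<and> ls ! j \<in> set (a # w)} = insert i (set \<pi>)"
      using \<pi>(2) i(1) by auto
    moreover have "i \<notin> set \<pi>" using \<pi>(2) i Cons.prems(1) by auto
    moreover have "F a = C a @ B a @ D a" "F' a = C a @ B' a @ D a"
      using Cons.prems(3) True by auto
    ultimately show ?thesis
      using \<pi>(1) rs F F' i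
      by (intro exI[of _ "C a"] exI[of _ "i # \<pi>"] exI[of _ "(D a @ p) # rs"]) simp
  qed
qed

lemma local_replace_shifted_concat_map:
  assumes "distinct w" "distinct ls" "set ls \<subseteq> set w"
    and "\<And>l. l \<in> set ls \<Longrightarrow> F l = C l @ B l @ D l \<and> F' l = C l @ B' l @ D l"
    and "\<And>l. l \<in> set w \<Longrightarrow> l \<notin> set ls \<Longrightarrow> F l = F' l"
  shows "local_replace_shifted (map B ls) (map B' ls) (concat (map F w)) (concat (map F' w))"
proof -
  have "\<forall>l\<in>set ls. F l = C l @ B l @ D l \<and> F' l = C l @ B' l @ D l"
    "\<forall>l\<in>set w. l \<notin> set ls \<longrightarrow> F l = F' l"
    using assms(4,5) by auto
  from concat_map_eq_interleave[OF assms(1,2) this]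
  obtain p \<pi> rs where \<pi>: "distinct \<pi>" "set \<pi> = {i. i < length ls \<and> ls ! i \<in> set w}"
    and rs: "length rs = length \<pi>"
    and F: "concat (map F w) = p @ interleave (map (\<lambda>i. B (ls ! i)) \<pi>) rs"
    and F': "concat (map F' w) = p @ interleave (map (\<lambda>i. B' (ls ! i)) \<pi>) rs"
    by (elim exE conjE)
  have set_\<pi>: "set \<pi> = {..<length ls}" using \<pi>(2) assms(3) by auto
  then have "length rs = length ls" using rs \<pi>(1) by (metis distinct_card card_lessThan)
  moreover have reindex: "map ((!) (map X ls)) \<pi> = map (\<lambda>i. X (ls ! i)) \<pi>" for X
    using set_\<pi> by auto
  ultimately show ?thesis
    unfolding local_replace_shifted_def using \<pi>(1) set_\<pi> F F'
    by (intro conjI exI[of _ p] exI[of _ \<pi>] exI[of _ rs]) (simp_all add: reindex)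
qed

definition R2_insertion :: "letter \<Rightarrow> letter \<Rightarrow> nat \<Rightarrow> letter \<Rightarrow> letter list" where
  "R2_insertion a b n l =
     (if l = a then [(n, True, 1), (Suc n, True, -1)]
      else if l = b then [(n, False, 1), (Suc n, False, -1)] else [])"

lemma set_map_insert_append:
  "set (map_insert g (\<lambda>l. K' l @ K l) w) = set (map_insert g K w) \<union> set (concat (map K' w))"
  by (induction w) (auto simp: map_insert_def)

lemma mset_map_insert_append:
  "mset (map_insert g (\<lambda>l. K' l @ K l) w) = mset (map_insert g K w) + mset (concat (map K' w))"
  by (induction w) (simp_all add: map_insert_def)

lemma crossings_map_insert_R2:
  "crossings (map_insert g (\<lambda>l. R2_insertion a b n l @ K l) w) \<subseteq>
     crossings (map_insert g K w) \<union> {n, Suc n}"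
proof -
  have "fst ` set (concat (map (R2_insertion a b n) w)) \<subseteq> {n, Suc n}"
    by (auto simp: R2_insertion_def split: if_splits)
  then show ?thesis unfolding crossings_def set_map_insert_append image_Un by blast
qed

lemma gauss_wf_map_insert_R2:
  assumes wf: "gauss_wf (map_insert g K w)" and "distinct w" "a \<in> set w" "b \<in> set w" "a \<noteq> b"
    and fresh: "n \<notin> crossings (map_insert g K w)" "Suc n \<notin> crossings (map_insert g K w)"
  shows "gauss_wf (map_insert g (\<lambda>l. R2_insertion a b n l @ K l) w)"
proof -
  let ?bigon = "[(n, True, 1), (Suc n, True, -1), (n, False, 1), (Suc n, False, -1 :: int)]"
  have "mset (map_insert g (\<lambda>l. R2_insertion a b n l @ K l) w) =
      mset (map_insert g K w) + mset (concat (map (R2_insertion a b n) w))"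
    by (rule mset_map_insert_append)
  also have "mset (concat (map (R2_insertion a b n) w)) = mset (concat (map (R2_insertion a b n) [a, b]))"
    using assms(2-5) by (intro mset_concat_map_supported) (auto simp: R2_insertion_def)
  also have "concat (map (R2_insertion a b n) [a, b]) = ?bigon"
    using \<open>a \<noteq> b\<close> by (simp add: R2_insertion_def)
  finally have "mset (map_insert g (\<lambda>l. R2_insertion a b n l @ K l) w) = mset (map_insert g K w @ ?bigon)"
    by simp
  moreover have "gauss_wf ?bigon" by (auto simp: gauss_wf_iff wf_letter_set_def unit_sgn_def)
  moreover have "crossings ?bigon = {n, Suc n}" by (auto simp: crossings_def)
  then have "gauss_wf (map_insert g K w @ ?bigon) \<longleftrightarrow> gauss_wf (map_insert g K w) \<and> gauss_wf ?bigon"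
    using fresh by (intro gauss_wf_append) auto
  ultimately show ?thesis using wf gauss_wf_mset_cong by blast
qed

lemma diag_equiv_R2_insert:
  assumes wf: "gauss_wf (map_insert g K w)" and "distinct w" "a \<in> set w" "b \<in> set w" "a \<noteq> b"
    and fresh: "n \<notin> crossings (map_insert g K w)" "Suc n \<notin> crossings (map_insert g K w)"
  shows "diag_equiv (map_insert g K w) (map_insert g (\<lambda>l. R2_insertion a b n l @ K l) w)"
proof -
  have "local_replace_shifted (map (R2_insertion a b n) [a, b]) (map (\<lambda>_. []) [a, b])
      (map_insert g (\<lambda>l. R2_insertion a b n l @ K l) w) (map_insert g K w)"
    unfolding map_insert_def using assms(2-5)
    by (intro local_replace_shifted_concat_map[where C = "\<lambda>l. [g l]" and D = K])
      (simp_all add: R2_insertion_def)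
  then have "local_replace_shifted [[(n, True, 1), (Suc n, True, - 1)], [(n, False, 1), (Suc n, False, - 1)]]
      [[], []] (map_insert g (\<lambda>l. R2_insertion a b n l @ K l) w) (map_insert g K w)"
    using \<open>a \<noteq> b\<close> by (simp add: R2_insertion_def)
  then have "diag_equiv (map_insert g (\<lambda>l. R2_insertion a b n l @ K l) w) (map_insert g K w)"
    by (rule diag_equiv_R2_shifted) (use gauss_wf_map_insert_R2[OF assms] wf in \<open>simp_all add: unit_sgn_def\<close>)
  then show ?thesis by (rule diag_equiv_sym)
qed

lemma diag_equiv_insert_two_bigons:
  assumes wf: "gauss_wf (map g w)" and "distinct w" "distinct [a, b, c, d]" "set [a, b, c, d] \<subseteq> set w"
    and N: "\<forall>z\<in>crossings (map g w). z < N"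
  defines "K \<equiv> \<lambda>l. R2_insertion a d N l @ R2_insertion c b (N + 2) l"
  shows "gauss_wf (map_insert g K w) \<and> diag_equiv (map g w) (map_insert g K w)"
proof -
  let ?K1 = "R2_insertion c b (N + 2)"
  have in_w: "a \<in> set w" "b \<in> set w" "c \<in> set w" "d \<in> set w"
    and "c \<noteq> b" "a \<noteq> d"
    using assms(3,4) by auto
  have "N + 2 \<notin> crossings (map_insert g (\<lambda>_. []) w)" "Suc (N + 2) \<notin> crossings (map_insert g (\<lambda>_. []) w)"
    using N by auto
  note insert1 = diag_equiv_R2_insert[OF _ assms(2) in_w(3,2) \<open>c \<noteq> b\<close> this]
    gauss_wf_map_insert_R2[OF _ assms(2) in_w(3,2) \<open>c \<noteq> b\<close> this]
    crossings_map_insert_R2[of g c b "N + 2" "\<lambda>_. []" w]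
  have "crossings (map_insert g ?K1 w) \<subseteq> {..<N} \<union> {N + 2, Suc (N + 2)}"
    using insert1(3) N by auto
  then have "N \<notin> crossings (map_insert g ?K1 w)" "Suc N \<notin> crossings (map_insert g ?K1 w)"
    by auto
  note insert2 = diag_equiv_R2_insert[OF _ assms(2) in_w(1,4) \<open>a \<noteq> d\<close> this]
    gauss_wf_map_insert_R2[OF _ assms(2) in_w(1,4) \<open>a \<noteq> d\<close> this]
  show ?thesis
    using insert1(1,2) insert2 wf unfolding K_def by (auto intro: diag_equiv_trans)
qed

section \<open>Changing crossings\<close>

fun crossing_change :: "nat set \<Rightarrow> letter \<Rightarrow> letter" where
  "crossing_change Z (x, ov, s) = (if x \<in> Z then (x, \<not> ov, - s) else (x, ov, s))"

lemma fst_crossing_change [simp]: "fst (crossing_change Z l) = fst l"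
  by (cases l) simp

lemma crossing_change_involutive [simp]: "crossing_change Z (crossing_change Z l) = l"
  by (cases l) simp

lemma crossing_change_empty [simp]: "crossing_change {} l = l"
  by (cases l) simp

lemma crossing_change_disjoint_Un:
  "Y \<inter> Z = {} \<Longrightarrow> crossing_change Y (crossing_change Z l) = crossing_change (Y \<union> Z) l"
  by (cases l) auto

lemma crossings_map_crossing_change [simp]: "crossings (map (crossing_change Z) w) = crossings w"
  unfolding crossings_def by (simp add: image_image)

lemma gauss_wf_map_crossing_change:
  assumes "gauss_wf w"
  shows "gauss_wf (map (crossing_change Z) w)"
proof -
  have inj: "inj (crossing_change Z)" by (metis crossing_change_involutive injI)
  have mem: "l \<in> crossing_change Z ` S \<longleftrightarrow> crossing_change Z l \<in> S" for l S
    by (metis crossing_change_involutive image_iff)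
  have "wf_letter_set (crossing_change Z ` set w)"
    unfolding wf_letter_set_def mem
  proof (intro allI impI)
    fix x ov s assume l: "crossing_change Z (x, ov, s) \<in> set w"
    show "unit_sgn s \<and> crossing_change Z (x, \<not> ov, s) \<in> set w \<and>
        (\<forall>s'. crossing_change Z (x, ov, s') \<in> set w \<longrightarrow> s' = s)"
    proof (cases "x \<in> Z")
      case True
      then have l': "(x, \<not> ov, - s) \<in> set w" using l by simp
      then have "unit_sgn (- s)" "(x, ov, - s) \<in> set w" using gauss_wf_letterD[OF assms l'] by simp_all
      moreover have "s' = s" if "(x, \<not> ov, - s') \<in> set w" for s'
        using gauss_wf_sign_unique[OF assms l' that] by simp
      ultimately show ?thesis using True by (auto simp: unit_sgn_def)
    next
      case False
      then have l': "(x, ov, s) \<in> set w" using l by simp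
      then have "unit_sgn s" "(x, \<not> ov, s) \<in> set w" using gauss_wf_letterD[OF assms l'] by simp_all
      moreover have "s' = s" if "(x, ov, s') \<in> set w" for s'
        using gauss_wf_sign_unique[OF assms l' that] .
      ultimately show ?thesis using False by auto
    qed
  qed
  then show ?thesis
    using assms inj unfolding gauss_wf_iff by (simp add: distinct_map inj_on_subset[OF inj])
qed

text \<open>The "#" of d_blocks with ha = 1, hc = -1, vb = -1, vd = 1 and o2 = o4 = True: with these
  orientations each of its four blocks is a passage of x or y immediately followed by a passage
  of the positive crossing n or m.\<close>
lemma diag_equiv_D_diagonal:
  fixes x y n m :: nat and ox oy :: bool
  defines "sx \<equiv> if ox then -1 else 1 :: int" and "sy \<equiv> if oy then -1 else 1 :: int"
  defines "a \<equiv> (x, ox, sx)" and "b \<equiv> (x, \<not> ox, sx)"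
    and "c \<equiv> (y, oy, sy)" and "d \<equiv> (y, \<not> oy, sy)"
  assumes labels: "distinct [x, n, y, m]" and "distinct w"
    and x_letters: "{l \<in> set w. fst l = x} = {a, b}"
    and y_letters: "{l \<in> set w. fst l = y} = {c, d}"
    and K: "K a = (n, True, 1) # ka" "K b = (m, False, 1) # kb"
      "K c = (m, True, 1) # kc" "K d = (n, False, 1) # kd"
    and wf: "gauss_wf (map_insert id K w)" "gauss_wf (map_insert (crossing_change {x, y}) K w)"
  shows "diag_equiv (map_insert id K w) (map_insert (crossing_change {x, y}) K w)"
proof -
  let ?f = "crossing_change {x, y}"
  have "{a, b} \<subseteq> set w" "{c, d} \<subseteq> set w"
    using x_letters y_letters by (metis Collect_subset)+
  then have in_w: "set [a, b, c, d] \<subseteq> set w" by simp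
  have "distinct [a, b, c, d]" using labels by (simp add: a_def b_def c_def d_def)
  moreover have "?f l = l" if "l \<in> set w" "l \<notin> set [a, b, c, d]" for l
  proof -
    have "l \<notin> {l \<in> set w. fst l = x}" "l \<notin> {l \<in> set w. fst l = y}"
      unfolding x_letters y_letters using that(2) by auto
    then show ?thesis using that(1) by (cases l) simp
  qed
  ultimately have "local_replace_shifted (map (\<lambda>l. [l, hd (K l)]) [a, b, c, d])
      (map (\<lambda>l. [?f l, hd (K l)]) [a, b, c, d]) (map_insert id K w) (map_insert ?f K w)"
    unfolding map_insert_def using \<open>distinct w\<close> in_w K
    by (intro local_replace_shifted_concat_map[where C = "\<lambda>_. []" and D = "\<lambda>l. tl (K l)"]) auto
  moreover have "map (\<lambda>l. [l, hd (K l)]) [a, b, c, d] =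
      d_blocks x n y m 1 (-1) (-1) 1 ox True oy True"
    using K unfolding a_def b_def c_def d_def sx_def sy_def
    by (cases ox; cases oy) (simp_all add: d_blocks_def Let_def)
  moreover have "map (\<lambda>l. [?f l, hd (K l)]) [a, b, c, d] =
      d_blocks x n y m 1 (-1) (-1) 1 (\<not> ox) True (\<not> oy) True"
    using K labels unfolding a_def b_def c_def d_def sx_def sy_def
    by (cases ox; cases oy) (simp_all add: d_blocks_def Let_def)
  ultimately have "local_replace_shifted (d_blocks x n y m 1 (-1) (-1) 1 ox True oy True)
      (d_blocks x n y m 1 (-1) (-1) 1 (\<not> ox) True (\<not> oy) True)
      (map_insert id K w) (map_insert ?f K w)"
    by simp
  then show ?thesis
    by (rule diag_equiv_D_shifted) (use labels wf in \<open>simp_all add: unit_sgn_def\<close>)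
qed

lemma diag_equiv_change_two:
  assumes wf: "gauss_wf w" and "x \<noteq> y" "x \<in> crossings w" "y \<in> crossings w"
  shows "diag_equiv w (map (crossing_change {x, y}) w)"
proof -
  obtain ox where x_letters: "{l \<in> set w. fst l = x} =
      {(x, ox, if ox then -1 else 1), (x, \<not> ox, if ox then -1 else 1)}"
    using gauss_wf_crossing_letters[OF wf \<open>x \<in> crossings w\<close>] .
  obtain oy where y_letters: "{l \<in> set w. fst l = y} =
      {(y, oy, if oy then -1 else 1), (y, \<not> oy, if oy then -1 else 1)}"
    using gauss_wf_crossing_letters[OF wf \<open>y \<in> crossings w\<close>] .
  define a b c d where "a = (x, ox, if ox then -1 else 1 :: int)"
    and "b = (x, \<not> ox, if ox then -1 else 1 :: int)"
    and "c = (y, oy, if oy then -1 else 1 :: int)" and "d = (y, \<not> oy, if oy then -1 else 1 :: int)"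
  have x_ab: "{l \<in> set w. fst l = x} = {a, b}" and y_cd: "{l \<in> set w. fst l = y} = {c, d}"
    using x_letters y_letters by (simp_all add: a_def b_def c_def d_def)
  then have "{a, b} \<subseteq> set w" "{c, d} \<subseteq> set w" by (metis Collect_subset)+
  moreover have "distinct [a, b, c, d]" using \<open>x \<noteq> y\<close> by (simp add: a_def b_def c_def d_def)
  ultimately have in_w: "a \<in> set w" "b \<in> set w" "c \<in> set w" "d \<in> set w"
    and distinct: "a \<noteq> b" "a \<noteq> c" "a \<noteq> d" "b \<noteq> c" "b \<noteq> d" "c \<noteq> d"
    by auto
  obtain N where N: "\<forall>z\<in>crossings w. z < N"
    using finite_nat_set_iff_bounded[of "crossings w"] unfolding crossings_def by auto
  \<comment> \<open>bigons between the strands through c, b and through a, d form a "#" with x, y on a diagonal\<close>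
  define K where "K = (\<lambda>l. R2_insertion a d N l @ R2_insertion c b (N + 2) l)"
  have square: "gauss_wf (map_insert g K w) \<and> diag_equiv (map g w) (map_insert g K w)"
    if "gauss_wf (map g w)" "crossings (map g w) = crossings w" for g
    using diag_equiv_insert_two_bigons[of g w a b c d N] that N in_w distinct gauss_wf_distinct[OF wf]
    unfolding K_def by simp
  have K_letters: "K a = [(N, True, 1), (Suc N, True, -1)]" "K b = [(N + 2, False, 1), (Suc (N + 2), False, -1)]"
    "K c = [(N + 2, True, 1), (Suc (N + 2), True, -1)]" "K d = [(N, False, 1), (Suc N, False, -1)]"
    using distinct by (simp_all add: K_def R2_insertion_def)
  have "x < N" "y < N" using N assms(3,4) by auto
  have "diag_equiv w (map_insert id K w)" using square[of id] wf by simp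
  also have "diag_equiv \<dots> (map_insert (crossing_change {x, y}) K w)"
    using diag_equiv_D_diagonal[of x N y "N + 2" w ox oy K] x_ab y_cd K_letters
      square[of id] square[of "crossing_change {x, y}"] wf gauss_wf_map_crossing_change[OF wf]
      gauss_wf_distinct[OF wf] \<open>x \<noteq> y\<close> \<open>x < N\<close> \<open>y < N\<close>
    by (simp add: a_def b_def c_def d_def)
  also have "diag_equiv \<dots> (map (crossing_change {x, y}) w)"
    using square[of "crossing_change {x, y}"] gauss_wf_map_crossing_change[OF wf]
    by (simp add: diag_equiv_sym)
  finally show ?thesis .
qed

lemma diag_equiv_change_even:
  assumes "gauss_wf w" "finite Z" "even (card Z)" "Z \<subseteq> crossings w"
  shows "diag_equiv w (map (crossing_change Z) w)"
  using assms(2-4)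
proof (induction "card Z" arbitrary: Z rule: less_induct)
  case less
  show ?case
  proof (cases "Z = {}")
    case True
    then show ?thesis by (simp add: map_idI)
  next
    case False
    then obtain x where "x \<in> Z" by blast
    moreover have "Z \<noteq> {x}" using \<open>even (card Z)\<close> by auto
    ultimately obtain y where "y \<in> Z" "y \<noteq> x" by blast
    define Z' where "Z' = Z - {x, y}"
    have Z: "Z = {x, y} \<union> Z'" and disjoint: "{x, y} \<inter> Z' = {}"
      using \<open>x \<in> Z\<close> \<open>y \<in> Z\<close> unfolding Z'_def by auto
    have "finite Z'" "x \<notin> Z'" "y \<notin> Z'" using less.prems(1) disjoint unfolding Z by auto
    then have card: "card Z = card Z' + 2" using \<open>y \<noteq> x\<close> unfolding Z by simp
    have "diag_equiv w (map (crossing_change Z') w)"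
      using less card Z by (intro less.hyps) auto
    also have "diag_equiv \<dots> (map (crossing_change {x, y}) (map (crossing_change Z') w))"
      using less.prems(3) \<open>x \<in> Z\<close> \<open>y \<in> Z\<close> \<open>y \<noteq> x\<close>
      by (intro diag_equiv_change_two gauss_wf_map_crossing_change assms(1)) auto
    also have "map (crossing_change {x, y}) (map (crossing_change Z') w) = map (crossing_change Z) w"
      unfolding Z by (simp add: crossing_change_disjoint_Un[OF disjoint])
    finally show ?thesis .
  qed
qed

section \<open>Shortening a word\<close>

lemma not_distinct_map_decomp:
  "\<not> distinct (map f xs) \<Longrightarrow> \<exists>p C m D q. xs = p @ [C] @ m @ [D] @ q \<and> f C = f D"
proof (induction xs)
  case (Cons a xs)
  show ?case
  proof (cases "f a \<in> f ` set xs")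
    case True
    then obtain C where "C \<in> set xs" "f C = f a" by auto
    then obtain m q where "xs = m @ C # q" by (metis split_list)
    then have "a # xs = [] @ [a] @ m @ [C] @ q \<and> f a = f C" using \<open>f C = f a\<close> by simp
    then show ?thesis by blast
  next
    case False
    then obtain p C m D q where "xs = p @ [C] @ m @ [D] @ q" "f C = f D" using Cons by auto
    then have "a # xs = (a # p) @ [C] @ m @ [D] @ q \<and> f C = f D" by simp
    then show ?thesis by blast
  qed
qed simp

lemma innermost_repeated_label:
  assumes "w = p @ [A] @ m @ [B] @ q" "fst A = fst B"
  shows "\<exists>p A m B q. w = p @ [A] @ m @ [B] @ q \<and> fst A = fst B \<and> distinct (map fst (A # m))"
  using assms
proof (induction "length m" arbitrary: p A m B q rule: less_induct)
  case less
  show ?case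
  proof (cases "distinct (map fst (A # m))")
    case True
    then show ?thesis using less.prems by blast
  next
    case False
    then obtain p' C m' D q' where A_m: "A # m = p' @ [C] @ m' @ [D] @ q'" and "fst C = fst D"
      using not_distinct_map_decomp[OF False] by (elim exE conjE)
    have "length (A # m) = length (p' @ [C] @ m' @ [D] @ q')" by (simp only: A_m)
    then have "length m' < length m" by simp
    moreover have "w = (p @ p') @ [C] @ m' @ [D] @ (q' @ [B] @ q)"
      using less.prems(1) A_m by simp
    ultimately show ?thesis using less.hyps \<open>fst C = fst D\<close> by blast
  qed
qed

lemma obtain_even_change_all_over:
  assumes "distinct (map fst (A # m))"
  obtains Z where "finite Z" "even (card Z)" "Z \<subseteq> fst ` set (A # m)"
    "\<forall>l\<in>set m. fst (snd (crossing_change Z l))"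
proof -
  define U where "U = fst ` {l \<in> set m. \<not> fst (snd l)}"
  \<comment> \<open>changing fst A as well only swaps the roles of the two occurrences of that label\<close>
  define Z where "Z = (if even (card U) then U else insert (fst A) U)"
  have "fst A \<notin> U" using assms unfolding U_def by auto
  then have "finite Z" "even (card Z)" "Z \<subseteq> fst ` set (A # m)"
    unfolding Z_def U_def by auto
  moreover have "fst (snd (crossing_change Z l))" if "l \<in> set m" for l
  proof -
    obtain x ov s where l: "l = (x, ov, s)" by (cases l)
    have "fst A \<notin> fst ` set m" and inj: "inj_on fst (set m)"
      using assms by (simp_all add: distinct_map)
    then have "x \<noteq> fst A" using that l by (metis fst_conv image_eqI)
    moreover have "x \<in> U \<longleftrightarrow> \<not> ov"
    proof
      assume "x \<in> U"
      then obtain l' where "l' \<in> set m" "\<not> fst (snd l')" "fst l' = x" unfolding U_def by blast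
      then have "l' = l" using inj_onD[OF inj, of l' l] that l by simp
      then show "\<not> ov" using \<open>\<not> fst (snd l')\<close> l by simp
    next
      assume "\<not> ov"
      then show "x \<in> U" using that l unfolding U_def by force
    qed
    ultimately show ?thesis using l unfolding Z_def by auto
  qed
  ultimately show thesis using that by blast
qed

lemma diag_equiv_shorter:
  assumes wf: "gauss_wf w" and "w \<noteq> []"
  shows "\<exists>w'. gauss_wf w' \<and> length w' < length w \<and> diag_equiv w w'"
proof -
  obtain x ov s w0 where w: "w = (x, ov, s) # w0" using \<open>w \<noteq> []\<close> by (metis list.exhaust prod_cases3)
  then have "(x, \<not> ov, s) \<in> set w0" using gauss_wf_letterD(2)[OF wf, of x ov s] by auto
  then obtain m q where "w = [] @ [(x, ov, s)] @ m @ [(x, \<not> ov, s)] @ q"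
    using w by (auto dest: split_list)
  then have "\<exists>p A m B q. w = p @ [A] @ m @ [B] @ q \<and> fst A = fst B \<and> distinct (map fst (A # m))"
    by (rule innermost_repeated_label) simp
  then obtain p A m B q where w_split: "w = p @ [A] @ m @ [B] @ q" and "fst A = fst B"
    and "distinct (map fst (A # m))"
    by (elim exE conjE)
  then obtain Z where Z: "finite Z" "even (card Z)" "Z \<subseteq> fst ` set (A # m)"
    and over: "\<forall>l\<in>set m. fst (snd (crossing_change Z l))"
    using obtain_even_change_all_over by blast
  let ?f = "crossing_change Z"
  have "Z \<subseteq> crossings w" using Z(3) w_split unfolding crossings_def by auto
  then have "diag_equiv w (map ?f w)" using diag_equiv_change_even wf Z(1,2) by blast
  also have "map ?f w = map ?f p @ [?f A] @ map ?f m @ [?f B] @ map ?f q" using w_split by simp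
  also have "diag_equiv \<dots> (map ?f p @ map ?f m @ map ?f q)"
    using diag_equiv_cancel_across_over gauss_wf_map_crossing_change[OF wf] w_split over
      \<open>fst A = fst B\<close> by simp
  finally have "diag_equiv w (map ?f p @ map ?f m @ map ?f q)" .
  moreover have "gauss_wf (map ?f p @ map ?f m @ map ?f q)"
    using gauss_wf_delete_pair gauss_wf_map_crossing_change[OF wf] w_split \<open>fst A = fst B\<close>
    by fastforce
  moreover have "length (map ?f p @ map ?f m @ map ?f q) < length w" using w_split by simp
  ultimately show ?thesis by blast
qed

lemma diag_equiv_Nil: "gauss_wf w \<Longrightarrow> diag_equiv w []"
proof (induction "length w" arbitrary: w rule: less_induct)
  case less
  show ?case
  proof (cases "w = []")
    case False
    then obtain w' where "gauss_wf w'" "length w' < length w" "diag_equiv w w'"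
      using diag_equiv_shorter less.prems by blast
    then show ?thesis using less.hyps diag_equiv_trans by blast
  qed simp
qed

theorem mainTheorem5:
  fixes K K' :: "letter list"
  assumes "gauss_wf K" and "gauss_wf K'"
  shows "diag_equiv K K'"
  using diag_equiv_Nil[OF assms(1)] diag_equiv_Nil[OF assms(2)] diag_equiv_sym diag_equiv_trans
  by blast

end
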